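(* Let $\ket{\phi}=w_0\ket{000}+w_1\ket{001}+w_2\ket{010}+w_3\ket{011}+w_4\ket{100}+w_5\ket{101}+w_6\ket{110}+w_7\ket{111}$ be a real 3-qubit state, i.e. $w_0,\dots,w_7\in\mathbb{R}$ with $\sum_i w_i^2=1$. Then there is a quantum circuit consisting of real local gates and at most four controlled-$Z$ gates that maps $\ket{\phi}$ to $\ket{000}$ (equivalently, whose inverse prepares $\ket{\phi}$ from $\ket{000}$). Moreover, if $$\Delta(\ket{\phi})=(w_0 w_7-w_1 w_6-w_2 w_5+w_3 w_4)^2-4 (w_1 w_2-w_0 w_3) (w_5 w_6-w_4 w_7)\ge 0,$$ then such a circuit exists using real local gates and at most three controlled-$Z$ gates.
   Context: A real local gate on three qubits is an operator $U_2\otimes U_1\otimes U_0$ where each $U_i$ is a $2\times 2$ real orthogonal matrix acting on one qubit. The two-qubit controlled-$Z$ gate is $cz=\mathrm{diag}(1,1,1,-1)$ in the basis $\ket{00},\ket{01},\ket{10},\ket{11}$; on three qubits (labelled $0,1,2$ from right to left, so in $\ket{q_2q_1q_0}$ qubit $0$ is the rightmost), $cz_{ij}$ denotes the controlled-$Z$ gate acting on qubits $i$ and $j$, i.e. it multiplies a basis state $\ket{q_2q_1q_0}$ by $-1$ exactly when $q_i=q_j=1$ and fixes it otherwise. A circuit is a finite composition of such gates. *)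

theory Defs
  imports "HOL-Analysis.Analysis"
begin

text \<open>Three-qubit real states are functions nat \<Rightarrow> real; the amplitude of the basis
 state |q2 q1 q0> is stored at index 4*q2 + 2*q1 + q0 (indices 0..7; values at
 indices \<ge> 8 are irrelevant).\<close>

definition qbit :: "nat \<Rightarrow> nat \<Rightarrow> nat" where
  "qbit q k = (k div 2 ^ q) mod 2"

definition bidx :: "nat \<Rightarrow> 2" where
  "bidx b = (if b = 0 then 0 else 1)"

definition ent :: "real^2^2 \<Rightarrow> nat \<Rightarrow> nat \<Rightarrow> real" where
  "ent U a b = U $ bidx a $ bidx b"

datatype gate = Local "real^2^2" "real^2^2" "real^2^2" | CZ nat nat

definition ket000 :: "nat \<Rightarrow> real" where
  "ket000 k = (if k = 0 then 1 else 0)"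

fun apply_gate :: "gate \<Rightarrow> (nat \<Rightarrow> real) \<Rightarrow> (nat \<Rightarrow> real)" where
  "apply_gate (Local U2 U1 U0) \<psi> = (\<lambda>i. if i < 8 then
       (\<Sum>j<8. ent U2 (qbit 2 i) (qbit 2 j) * ent U1 (qbit 1 i) (qbit 1 j)
               * ent U0 (qbit 0 i) (qbit 0 j) * \<psi> j) else 0)"
| "apply_gate (CZ a b) \<psi> = (\<lambda>i. if i < 8 then
       (if qbit a i = 1 \<and> qbit b i = 1 then - \<psi> i else \<psi> i) else 0)"

fun valid_gate :: "gate \<Rightarrow> bool" where
  "valid_gate (Local U2 U1 U0) \<longleftrightarrow>
     orthogonal_matrix U2 \<and> orthogonal_matrix U1 \<and> orthogonal_matrix U0"
| "valid_gate (CZ a b) \<longleftrightarrow> a < 3 \<and> b < 3 \<and> a \<noteq> b"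

fun is_cz :: "gate \<Rightarrow> bool" where
  "is_cz (CZ _ _) = True"
| "is_cz (Local _ _ _) = False"

text \<open>A circuit is a list of gates, applied left to right (head first).\<close>
definition run_circuit :: "gate list \<Rightarrow> (nat \<Rightarrow> real) \<Rightarrow> (nat \<Rightarrow> real)" where
  "run_circuit c \<psi> = fold apply_gate c \<psi>"

definition num_cz :: "gate list \<Rightarrow> nat" where
  "num_cz c = length (filter is_cz c)"

definition maps_to_000 :: "gate list \<Rightarrow> (nat \<Rightarrow> real) \<Rightarrow> bool" where
  "maps_to_000 c \<psi> \<longleftrightarrow> (\<forall>i<8. run_circuit c \<psi> i = ket000 i)"

definition Delta :: "(nat \<Rightarrow> real) \<Rightarrow> real" where
  "Delta w = (w 0 * w 7 - w 1 * w 6 - w 2 * w 5 + w 3 * w 4)^2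
             - 4 * (w 1 * w 2 - w 0 * w 3) * (w 5 * w 6 - w 4 * w 7)"

end

(*
  A rotation of qubit 2 by an angle t turns the amplitudes of the branch with
  qubit 2 = 0 into a 2x2 matrix whose determinant is a quadratic form in
  (cos t, sin t) with discriminant Delta. If Delta >= 0 this matrix can be made
  singular, and rotations of qubits 0 and 1 then reduce that branch to a multiple
  of |000>. Conjugating cz_pq by rotations of qubit q gives a reflection of
  qubit q controlled by qubit p; three such controlled reflections clear all
  remaining amplitudes except that of |100>, which a final rotation of qubit 2
  merges into |000>. If Delta < 0, a first cz_20 makes Delta positive, since
  Delta of a state plus Delta of its image under cz_20 is a sum of two squares.
*)

theory Submission
  imports Defs "HOL-Library.Quadratic_Discriminant"
begin

lemma sum_lessThan_8:
  fixes f :: "nat \<Rightarrow> 'a::comm_monoid_add"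
  shows "(\<Sum>j<8. f j) = f 0 + f 1 + f 2 + f 3 + f 4 + f 5 + f 6 + f 7"
  by (simp add: eval_nat_numeral)

lemma less_8_cases: "(i::nat) < 8 \<Longrightarrow> i \<in> {0,1,2,3,4,5,6,7}"
  by auto

lemma all_less_8_iff: "(\<forall>i<8. P i) \<longleftrightarrow> P 0 \<and> P 1 \<and> P 2 \<and> P 3 \<and> P 4 \<and> P 5 \<and> P 6 \<and> P (7::nat)"
  using less_8_cases by fastforce

lemma qbit_cases: "qbit q i = 0 \<or> qbit q i = 1"
  by (auto simp: qbit_def)

lemma qbit_add_two_power:
  assumes "p < 3" "q < 3" "i < 8" "qbit q i = 0"
  shows "i + 2 ^ q < 8" "qbit q (i + 2 ^ q) = 1" "p \<noteq> q \<Longrightarrow> qbit p (i + 2 ^ q) = qbit p i"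
proof -
  have "p \<in> {0,1,2}" "q \<in> {0,1,2}" using assms(1,2) by auto
  then show "i + 2 ^ q < 8" "qbit q (i + 2 ^ q) = 1" "p \<noteq> q \<Longrightarrow> qbit p (i + 2 ^ q) = qbit p i"
    using less_8_cases[OF assms(3)] assms(4) by (auto simp: qbit_def)
qed

lemma qbit_diff_two_power:
  assumes "p < 3" "q < 3" "i < 8" "qbit q i = 1"
  shows "2 ^ q \<le> i" "qbit q (i - 2 ^ q) = 0" "p \<noteq> q \<Longrightarrow> qbit p (i - 2 ^ q) = qbit p i"
proof -
  have "p \<in> {0,1,2}" "q \<in> {0,1,2}" using assms(1,2) by auto
  then show "2 ^ q \<le> i" "qbit q (i - 2 ^ q) = 0" "p \<noteq> q \<Longrightarrow> qbit p (i - 2 ^ q) = qbit p i"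
    using less_8_cases[OF assms(3)] assms(4) by (auto simp: qbit_def)
qed

definition rot :: "real \<Rightarrow> real^2^2" where
  "rot t = (\<chi> i j. if i = j then cos t else if i = 0 then sin t else - sin t)"

lemma orthogonal_matrix_rot: "orthogonal_matrix (rot t)"
  by (simp add: orthogonal_matrix_def vec_eq_iff forall_2 matrix_matrix_mult_def
      transpose_def mat_def rot_def sum_2 add.commute[of "sin t * sin t"])

definition rotation :: "nat \<Rightarrow> real \<Rightarrow> gate" where
  "rotation q t = Local (rot (if q = 2 then t else 0)) (rot (if q = 1 then t else 0))
     (rot (if q = 0 then t else 0))"

lemma valid_gate_rotation: "valid_gate (rotation q t)"
  by (simp add: rotation_def orthogonal_matrix_rot)

lemma not_is_cz_rotation: "\<not> is_cz (rotation q t)"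
  by (simp add: rotation_def)

lemma apply_rotation:
  assumes "q < 3" "i < 8"
  shows "apply_gate (rotation q t) \<psi> i =
    (if qbit q i = 0 then cos t * \<psi> i + sin t * \<psi> (i + 2 ^ q)
     else cos t * \<psi> i - sin t * \<psi> (i - 2 ^ q))"
proof -
  have "q \<in> {0,1,2}" using assms(1) by auto
  then show ?thesis using less_8_cases[OF assms(2)]
    by (auto simp: rotation_def sum_lessThan_8 ent_def bidx_def rot_def qbit_def)
qed

text \<open>Simp rewrites \<open>1\<close> to \<open>Suc 0\<close> and \<open>0 + 2\<close> to \<open>Suc (Suc 0)\<close>; the reversed
  equations turn computed indices back into the numerals used for amplitudes.\<close>

lemmas amplitude_simps =
  apply_rotation qbit_def One_nat_def [symmetric] numeral_2_eq_2 [symmetric]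

definition creflection :: "nat \<Rightarrow> nat \<Rightarrow> real \<Rightarrow> gate list" where
  "creflection p q t = [rotation q (t / 2), CZ p q, rotation q (- t / 2)]"

lemma run_creflection:
  assumes "p < 3" "q < 3" "p \<noteq> q" "i < 8"
  shows "run_circuit (creflection p q t) \<psi> i =
    (if qbit p i = 0 then \<psi> i
     else if qbit q i = 0 then cos t * \<psi> i + sin t * \<psi> (i + 2 ^ q)
     else sin t * \<psi> (i - 2 ^ q) - cos t * \<psi> i)"
proof -
  define u where "u = t / 2"
  have cos_t: "cos t = (cos u)\<^sup>2 - (sin u)\<^sup>2" and sin_t: "sin t = 2 * sin u * cos u"
    using cos_double[of u] sin_double[of u] by (simp_all add: u_def)
  have run: "run_circuit (creflection p q t) \<psi> =
      apply_gate (rotation q (- u)) (apply_gate (CZ p q) (apply_gate (rotation q u) \<psi>))"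
    by (simp add: creflection_def run_circuit_def u_def)
  have unrotate: "cos u * (cos u * x) + sin u * (sin u * x) = x" for x
  proof -
    have "cos u * (cos u * x) + sin u * (sin u * x) = ((sin u)\<^sup>2 + (cos u)\<^sup>2) * x"
      by algebra
    then show ?thesis by simp
  qed
  show ?thesis
  proof (cases "qbit q i = 0")
    case True
    note up = qbit_add_two_power[OF assms(1,2,4) True]
    show ?thesis
      unfolding run cos_t sin_t using True up assms(2,3,4) qbit_cases[of p i]
      by (auto simp: apply_rotation algebra_simps power2_eq_square unrotate)
  next
    case False
    then have "qbit q i = 1" using qbit_cases[of q i] by simp
    note down = qbit_diff_two_power[OF assms(1,2,4) this]
    show ?thesis
      unfolding run cos_t sin_t using \<open>qbit q i = 1\<close> down assms(2,3,4) qbit_cases[of p i]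
      by (auto simp: apply_rotation algebra_simps power2_eq_square unrotate)
  qed
qed

definition sq_norm :: "(nat \<Rightarrow> real) \<Rightarrow> real" where
  "sq_norm \<psi> = (\<Sum>i<8. (\<psi> i)\<^sup>2)"

lemma sq_norm_CZ: "sq_norm (apply_gate (CZ a b) \<psi>) = sq_norm \<psi>"
  unfolding sq_norm_def by (rule sum.cong) auto

lemma sq_norm_rotation:
  assumes "q < 3"
  shows "sq_norm (apply_gate (rotation q t) \<psi>) = sq_norm \<psi>"
proof -
  have pair: "(cos t * x + sin t * y)\<^sup>2 + (cos t * y - sin t * x)\<^sup>2 = x\<^sup>2 + y\<^sup>2" for x y
  proof -
    have "(cos t * x + sin t * y)\<^sup>2 + (cos t * y - sin t * x)\<^sup>2
        = ((sin t)\<^sup>2 + (cos t)\<^sup>2) * (x\<^sup>2 + y\<^sup>2)"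
      by algebra
    then show ?thesis by simp
  qed
  consider "q = 0" | "q = 1" | "q = 2" using assms by linarith
  then show ?thesis
  proof cases
    case 1
    show ?thesis
      unfolding \<open>q = 0\<close> sq_norm_def sum_lessThan_8
      using pair[of "\<psi> 0" "\<psi> 1"] pair[of "\<psi> 2" "\<psi> 3"] pair[of "\<psi> 4" "\<psi> 5"] pair[of "\<psi> 6" "\<psi> 7"]
      by (simp del: One_nat_def add: amplitude_simps)
  next
    case 2
    show ?thesis
      unfolding \<open>q = 1\<close> sq_norm_def sum_lessThan_8
      using pair[of "\<psi> 0" "\<psi> 2"] pair[of "\<psi> 1" "\<psi> 3"] pair[of "\<psi> 4" "\<psi> 6"] pair[of "\<psi> 5" "\<psi> 7"]
      by (simp del: One_nat_def add: amplitude_simps)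
  next
    case 3
    show ?thesis
      unfolding \<open>q = 2\<close> sq_norm_def sum_lessThan_8
      using pair[of "\<psi> 0" "\<psi> 4"] pair[of "\<psi> 1" "\<psi> 5"] pair[of "\<psi> 2" "\<psi> 6"] pair[of "\<psi> 3" "\<psi> 7"]
      by (simp del: One_nat_def add: amplitude_simps)
  qed
qed

lemma sq_norm_creflection: "q < 3 \<Longrightarrow> sq_norm (run_circuit (creflection p q t) \<psi>) = sq_norm \<psi>"
  by (simp del: apply_gate.simps add: creflection_def run_circuit_def sq_norm_rotation sq_norm_CZ)

definition reaches_000 :: "nat \<Rightarrow> (nat \<Rightarrow> real) \<Rightarrow> bool" where
  "reaches_000 k \<psi> \<longleftrightarrow> (\<exists>c. (\<forall>g\<in>set c. valid_gate g) \<and> num_cz c \<le> k \<and> maps_to_000 c \<psi>)"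

lemma reaches_000_mono: "reaches_000 k \<psi> \<Longrightarrow> k \<le> l \<Longrightarrow> reaches_000 l \<psi>"
  unfolding reaches_000_def using order_trans by blast

lemma reaches_000_if_ket000: "\<forall>i<8. \<psi> i = ket000 i \<Longrightarrow> reaches_000 k \<psi>"
  unfolding reaches_000_def maps_to_000_def
  by (intro exI[of _ "[]"]) (simp add: run_circuit_def num_cz_def)

lemma reaches_000_run_circuit:
  assumes "\<forall>g\<in>set c. valid_gate g" "reaches_000 k (run_circuit c \<psi>)"
  shows "reaches_000 (num_cz c + k) \<psi>"
proof -
  obtain d where d: "\<forall>g\<in>set d. valid_gate g" "num_cz d \<le> k" "maps_to_000 d (run_circuit c \<psi>)"
    using assms(2) unfolding reaches_000_def by blast
  have "run_circuit (c @ d) \<psi> = run_circuit d (run_circuit c \<psi>)"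
    by (simp add: run_circuit_def)
  moreover have "num_cz (c @ d) = num_cz c + num_cz d"
    by (simp add: num_cz_def)
  ultimately show ?thesis
    using assms(1) d unfolding reaches_000_def maps_to_000_def
    by (intro exI[of _ "c @ d"]) auto
qed

lemma reaches_000_rotation: "reaches_000 k (apply_gate (rotation q t) \<psi>) \<Longrightarrow> reaches_000 k \<psi>"
  using reaches_000_run_circuit[of "[rotation q t]" k \<psi>]
  by (simp add: valid_gate_rotation not_is_cz_rotation run_circuit_def num_cz_def)

lemma reaches_000_CZ:
  assumes "a < 3" "b < 3" "a \<noteq> b" "reaches_000 k (apply_gate (CZ a b) \<psi>)"
  shows "reaches_000 (k + 1) \<psi>"
  using reaches_000_run_circuit[of "[CZ a b]" k \<psi>] assms by (simp add: run_circuit_def num_cz_def)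

lemma reaches_000_creflection:
  assumes "p < 3" "q < 3" "p \<noteq> q" "reaches_000 k (run_circuit (creflection p q t) \<psi>)"
  shows "reaches_000 (k + 1) \<psi>"
  using reaches_000_run_circuit[OF _ assms(4)] assms(1-3)
  by (simp add: creflection_def valid_gate_rotation not_is_cz_rotation num_cz_def)

lemma polar_coordinates:
  fixes x y :: real
  obtains a where "x = sqrt (x\<^sup>2 + y\<^sup>2) * cos a" "y = sqrt (x\<^sup>2 + y\<^sup>2) * sin a"
proof
  let ?z = "Complex x y"
  have z: "rcis (cmod ?z) (Arg ?z) = ?z" by (rule rcis_cmod_Arg)
  show "x = sqrt (x\<^sup>2 + y\<^sup>2) * cos (Arg ?z)" "y = sqrt (x\<^sup>2 + y\<^sup>2) * sin (Arg ?z)"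
    using arg_cong[OF z, of Re] arg_cong[OF z, of Im] by (simp_all add: complex_norm)
qed

lemma exists_rotation_to_axis:
  fixes x y :: real
  shows "\<exists>t. cos t * y - sin t * x = 0 \<and> cos t * x + sin t * y = sqrt (x\<^sup>2 + y\<^sup>2)"
proof -
  define r where "r = sqrt (x\<^sup>2 + y\<^sup>2)"
  obtain a where "x = r * cos a" "y = r * sin a"
    unfolding r_def by (rule polar_coordinates)
  then have "cos a * y - sin a * x = 0 \<and> cos a * x + sin a * y = r"
    using sin_cos_squared_add[of a] by algebra
  then show ?thesis unfolding r_def by blast
qed

lemma exists_reflection_to_axis:
  fixes x y :: real
  shows "\<exists>t. sin t * x - cos t * y = 0"
proof -
  obtain a where "x = sqrt (x\<^sup>2 + y\<^sup>2) * cos a" "y = sqrt (x\<^sup>2 + y\<^sup>2) * sin a"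
    by (rule polar_coordinates)
  then have "sin a * x - cos a * y = 0" by algebra
  then show ?thesis by blast
qed

lemma exists_rotation_to_axis_parallel:
  fixes x0 y0 x1 y1 :: real
  assumes "x0 * y1 - y0 * x1 = 0"
  shows "\<exists>t. cos t * y0 - sin t * x0 = 0 \<and> cos t * y1 - sin t * x1 = 0"
proof (cases "x0 = 0 \<and> y0 = 0")
  case True
  then show ?thesis using exists_rotation_to_axis[where x = x1 and y = y1] by auto
next
  case False
  define r where "r = sqrt (x0\<^sup>2 + y0\<^sup>2)"
  have "r \<noteq> 0" using False by (simp add: r_def sum_power2_eq_zero_iff)
  obtain a where a: "x0 = r * cos a" "y0 = r * sin a"
    unfolding r_def by (rule polar_coordinates)
  have "r * (cos a * y1 - sin a * x1) = 0" using assms a by algebra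
  then have "cos a * y1 - sin a * x1 = 0" using \<open>r \<noteq> 0\<close> by simp
  moreover have "cos a * y0 - sin a * x0 = 0" using a by algebra
  ultimately show ?thesis by blast
qed

lemma exists_angle_quadratic_form_eq_0:
  fixes a b c :: real
  assumes "discrim a b c \<ge> 0"
  shows "\<exists>t. a * (cos t)\<^sup>2 + b * cos t * sin t + c * (sin t)\<^sup>2 = 0"
proof (cases "a = 0")
  case True
  then show ?thesis by (intro exI[of _ 0]) simp
next
  case False
  define x where "x = (- b + sqrt (discrim a b c)) / (2 * a)"
  have root: "a * x\<^sup>2 + b * x + c = 0"
    using discriminant_nonneg[OF False assms] x_def by blast
  define r where "r = sqrt (x\<^sup>2 + 1\<^sup>2)"
  obtain t where t: "x = r * cos t" "1 = r * sin t"
    unfolding r_def by (rule polar_coordinates)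
  have "r\<^sup>2 * (a * (cos t)\<^sup>2 + b * cos t * sin t + c * (sin t)\<^sup>2) = 0"
    using root t by algebra
  moreover have "r \<noteq> 0" using t(2) by auto
  ultimately show ?thesis by auto
qed

lemma Delta_add_Delta_CZ_nonneg: "0 \<le> Delta \<psi> + Delta (apply_gate (CZ 2 0) \<psi>)"
proof -
  have "Delta \<psi> + Delta (apply_gate (CZ 2 0) \<psi>) =
      (\<psi> 0 * \<psi> 7 - \<psi> 1 * \<psi> 6 - \<psi> 2 * \<psi> 5 + \<psi> 3 * \<psi> 4)\<^sup>2
    + (\<psi> 0 * \<psi> 7 + \<psi> 1 * \<psi> 6 - \<psi> 2 * \<psi> 5 - \<psi> 3 * \<psi> 4)\<^sup>2"
    unfolding Delta_def by (simp del: One_nat_def add: qbit_def) algebra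
  then show ?thesis by simp
qed

lemma reaches_000_if_support_0_4:
  assumes "sq_norm \<psi> = 1" "\<forall>i\<in>{1,2,3,5,6,7}. \<psi> i = 0"
  shows "reaches_000 0 \<psi>"
proof -
  obtain t where t: "cos t * \<psi> 4 - sin t * \<psi> 0 = 0"
    "cos t * \<psi> 0 + sin t * \<psi> 4 = sqrt ((\<psi> 0)\<^sup>2 + (\<psi> 4)\<^sup>2)"
    using exists_rotation_to_axis by blast
  have "(\<psi> 0)\<^sup>2 + (\<psi> 4)\<^sup>2 = 1"
    using assms unfolding sq_norm_def sum_lessThan_8 by (simp del: One_nat_def)
  then have "\<forall>i<8. apply_gate (rotation 2 t) \<psi> i = ket000 i"
    using assms(2) t by (simp del: One_nat_def add: all_less_8_iff amplitude_simps ket000_def)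
  then have "reaches_000 0 (apply_gate (rotation 2 t) \<psi>)" by (rule reaches_000_if_ket000)
  then show ?thesis by (rule reaches_000_rotation)
qed

lemma reaches_000_if_support_0_4_6:
  assumes "sq_norm \<psi> = 1" "\<forall>i\<in>{1,2,3,5,7}. \<psi> i = 0"
  shows "reaches_000 1 \<psi>"
proof -
  obtain t where t: "sin t * \<psi> 4 - cos t * \<psi> 6 = 0"
    using exists_reflection_to_axis by blast
  let ?\<phi> = "run_circuit (creflection 2 1 t) \<psi>"
  have "sq_norm ?\<phi> = 1" using assms(1) by (simp add: sq_norm_creflection)
  moreover have "\<forall>i\<in>{1,2,3,5,6,7}. ?\<phi> i = 0"
    using assms(2) t by (simp del: One_nat_def add: run_creflection amplitude_simps)
  ultimately have "reaches_000 0 ?\<phi>" by (rule reaches_000_if_support_0_4)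
  then show ?thesis using reaches_000_creflection[of 2 1 0 t \<psi>] by (simp del: One_nat_def)
qed

lemma reaches_000_if_support_0_4_6_7:
  assumes "sq_norm \<psi> = 1" "\<forall>i\<in>{1,2,3,5}. \<psi> i = 0"
  shows "reaches_000 2 \<psi>"
proof -
  obtain t where t: "sin t * \<psi> 6 - cos t * \<psi> 7 = 0"
    using exists_reflection_to_axis by blast
  let ?\<phi> = "run_circuit (creflection 1 0 t) \<psi>"
  have "sq_norm ?\<phi> = 1" using assms(1) by (simp add: sq_norm_creflection)
  moreover have "\<forall>i\<in>{1,2,3,5,7}. ?\<phi> i = 0"
    using assms(2) t by (simp del: One_nat_def add: run_creflection amplitude_simps)
  ultimately have "reaches_000 1 ?\<phi>" by (rule reaches_000_if_support_0_4_6)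
  then show ?thesis using reaches_000_creflection[of 1 0 1 t \<psi>] by (simp del: One_nat_def)
qed

lemma reaches_000_if_support_0_4_5_6_7:
  assumes "sq_norm \<psi> = 1" "\<forall>i\<in>{1,2,3}. \<psi> i = 0"
  shows "reaches_000 3 \<psi>"
proof -
  obtain t where t: "sin t * \<psi> 4 - cos t * \<psi> 5 = 0"
    using exists_reflection_to_axis by blast
  let ?\<phi> = "run_circuit (creflection 2 0 t) \<psi>"
  have "sq_norm ?\<phi> = 1" using assms(1) by (simp add: sq_norm_creflection)
  moreover have "\<forall>i\<in>{1,2,3,5}. ?\<phi> i = 0"
    using assms(2) t by (simp del: One_nat_def add: run_creflection amplitude_simps)
  ultimately have "reaches_000 2 ?\<phi>" by (rule reaches_000_if_support_0_4_6_7)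
  then show ?thesis using reaches_000_creflection[of 2 0 2 t \<psi>] by (simp del: One_nat_def)
qed

lemma reaches_000_if_singular_block:
  assumes "sq_norm \<psi> = 1" "\<psi> 0 * \<psi> 3 - \<psi> 1 * \<psi> 2 = 0"
  shows "reaches_000 3 \<psi>"
proof -
  obtain t0 where t0: "cos t0 * \<psi> 1 - sin t0 * \<psi> 0 = 0" "cos t0 * \<psi> 3 - sin t0 * \<psi> 2 = 0"
    using exists_rotation_to_axis_parallel[OF assms(2)] by blast
  define \<phi> where "\<phi> = apply_gate (rotation 0 t0) \<psi>"
  have \<phi>: "\<phi> 1 = 0" "\<phi> 3 = 0"
    using t0 by (simp_all del: One_nat_def add: \<phi>_def amplitude_simps)
  obtain t1 where t1: "cos t1 * \<phi> 2 - sin t1 * \<phi> 0 = 0"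
    using exists_rotation_to_axis by blast
  define \<xi> where "\<xi> = apply_gate (rotation 1 t1) \<phi>"
  have "sq_norm \<xi> = 1" using assms(1) by (simp add: \<xi>_def \<phi>_def sq_norm_rotation)
  moreover have "\<forall>i\<in>{1,2,3}. \<xi> i = 0"
    using \<phi> t1 by (simp del: One_nat_def add: \<xi>_def amplitude_simps)
  ultimately have "reaches_000 3 \<xi>" by (rule reaches_000_if_support_0_4_5_6_7)
  then have "reaches_000 3 \<phi>" unfolding \<xi>_def by (rule reaches_000_rotation)
  then show ?thesis unfolding \<phi>_def by (rule reaches_000_rotation)
qed

lemma reaches_000_if_Delta_nonneg:
  assumes "sq_norm \<psi> = 1" "0 \<le> Delta \<psi>"
  shows "reaches_000 3 \<psi>"
proof -
  define a where "a = \<psi> 0 * \<psi> 3 - \<psi> 1 * \<psi> 2"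
  define b where "b = \<psi> 0 * \<psi> 7 + \<psi> 4 * \<psi> 3 - \<psi> 1 * \<psi> 6 - \<psi> 5 * \<psi> 2"
  define c where "c = \<psi> 4 * \<psi> 7 - \<psi> 5 * \<psi> 6"
  have "discrim a b c = Delta \<psi>"
    unfolding discrim_def Delta_def a_def b_def c_def by algebra
  then obtain t where t: "a * (cos t)\<^sup>2 + b * cos t * sin t + c * (sin t)\<^sup>2 = 0"
    using exists_angle_quadratic_form_eq_0 assms(2) by metis
  define \<phi> where "\<phi> = apply_gate (rotation 2 t) \<psi>"
  have "\<phi> 0 * \<phi> 3 - \<phi> 1 * \<phi> 2 = a * (cos t)\<^sup>2 + b * cos t * sin t + c * (sin t)\<^sup>2"
    unfolding \<phi>_def a_def b_def c_def by (simp del: One_nat_def add: amplitude_simps) algebra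
  then have "reaches_000 3 \<phi>"
    using t assms(1) by (intro reaches_000_if_singular_block) (simp_all add: \<phi>_def sq_norm_rotation)
  then show ?thesis unfolding \<phi>_def by (rule reaches_000_rotation)
qed

theorem mainTheorem1:
  fixes w :: "nat \<Rightarrow> real"
  assumes "(\<Sum>i<8. (w i)^2) = 1"
  shows "(\<exists>c. (\<forall>g\<in>set c. valid_gate g) \<and> num_cz c \<le> 4 \<and> maps_to_000 c w)
       \<and> (Delta w \<ge> 0 \<longrightarrow>
            (\<exists>c. (\<forall>g\<in>set c. valid_gate g) \<and> num_cz c \<le> 3 \<and> maps_to_000 c w))"
proof -
  have norm: "sq_norm w = 1" using assms by (simp add: sq_norm_def)
  have three: "0 \<le> Delta w \<Longrightarrow> reaches_000 3 w"
    using norm by (intro reaches_000_if_Delta_nonneg)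
  have "reaches_000 4 w"
  proof (cases "0 \<le> Delta w")
    case True
    show ?thesis using three[OF True] by (rule reaches_000_mono) simp
  next
    case False
    let ?w' = "apply_gate (CZ 2 0) w"
    have "0 \<le> Delta ?w'" using False Delta_add_Delta_CZ_nonneg[of w] by linarith
    moreover have "sq_norm ?w' = 1" using norm by (simp only: sq_norm_CZ)
    ultimately have "reaches_000 3 ?w'" by (intro reaches_000_if_Delta_nonneg)
    then show ?thesis using reaches_000_CZ[of 2 0 3 w] by simp
  qed
  with three show ?thesis unfolding reaches_000_def by blast
qed

end
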